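(* Let $\alpha$ be a nonzero real number. A regular curve in $\mathbb H^2$ with constant curvature, not passing through $N$, is an $\alpha$-stationary curve if and only if one of the following holds: (1) it is contained in a geodesic passing through $N$ (this case occurs for every value of $\alpha$); (2) it is contained in a circle of radius $r>0$ centered at $N$ and $\alpha=-r\coth(r)$ (this case occurs for every $r>0$).
   Context: Let $\langle x,y\rangle_\epsilon=x_1y_1+x_2y_2-x_3y_3$ be the Lorentzian inner product on $\mathbb R^3$ and $|x|_\epsilon=\sqrt{|\langle x,x\rangle_\epsilon|}$. The hyperbolic plane is $\mathbb H^2=\{(x,y,z):x^2+y^2-z^2=-1,\ z>0\}$ with the induced metric. It is parametrized by $\Psi(u,v)=(\sinh u\cos v,\sinh u\sin v,\cosh u)$. Let $N=(0,0,1)$. The hyperbolic distance from $\Psi(u,v)$ to $N$ is $u$, and the circle of radius $r$ centered at $N$ is $\{\Psi(r,v):v\in\mathbb R\}$. For a regular curve $\gamma(t)=\Psi(u(t),v(t))$ with $u>0$, we have $|\gamma'|_\epsilon=\sqrt{u'^2+\sinh^2(u)v'^2}$. Its unit normal is $$\mathbf n=\frac{1}{|\gamma'|_\epsilon}\big(u'\sin v+\sinh u\cosh u\,v'\cos v,\ \sinh u\cosh u\,v'\sin v-u'\cos v,\ \sinh^2(u)v'\big).$$ Its (geodesic) curvature is $\kappa=\langle\gamma'',\mathbf n\rangle_\epsilon/|\gamma'|_\epsilon^2$. The energy is $$E_\alpha[\gamma]=\int_\gamma\mathsf d^\alpha ds=\int u^\alpha\sqrt{u'^2+\sinh^2(u)v'^2}\,dt,$$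 where $\mathsf d$ is the distance to $N$. An $\alpha$-stationary curve is a critical point of $E_\alpha$, i.e. $(u,v)$ satisfies its Euler–Lagrange equations. Throughout the paper, $\alpha\neq0$ and curves avoid $N$. *)

theory Defs
  imports "HOL-Analysis.Analysis"
begin

definition lor :: "real \<times> real \<times> real \<Rightarrow> real \<times> real \<times> real \<Rightarrow> real" where
  "lor x y = fst x * fst y + fst (snd x) * fst (snd y) - snd (snd x) * snd (snd y)"

definition H2 :: "(real \<times> real \<times> real) set" where
  "H2 = {(x, y, z). x^2 + y^2 - z^2 = -1 \<and> z > 0}"

definition Npole :: "real \<times> real \<times> real" where
  "Npole = (0, 0, 1)"

definition Psi :: "real \<Rightarrow> real \<Rightarrow> real \<times> real \<times> real" where
  "Psi u v = (sinh u * cos v, sinh u * sin v, cosh u)"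

definition hgeodesic :: "(real \<times> real \<times> real) set \<Rightarrow> bool" where
  "hgeodesic G \<longleftrightarrow> G \<noteq> {} \<and> (\<exists>a b c. (a, b, c) \<noteq> (0, 0, 0) \<and>
      G = {p \<in> H2. a * fst p + b * fst (snd p) + c * snd (snd p) = 0})"

text \<open>Circle of radius r centred at N.\<close>
definition hcircle :: "real \<Rightarrow> (real \<times> real \<times> real) set" where
  "hcircle r = {Psi r v | v. True}"

definition gam :: "(real \<Rightarrow> real) \<Rightarrow> (real \<Rightarrow> real) \<Rightarrow> real \<Rightarrow> real \<times> real \<times> real" where
  "gam u v t = Psi (u t) (v t)"

definition gam1 :: "(real \<Rightarrow> real) \<Rightarrow> (real \<Rightarrow> real) \<Rightarrow> real \<Rightarrow> real" where
  "gam1 u v t = sinh (u t) * cos (v t)"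
definition gam2 :: "(real \<Rightarrow> real) \<Rightarrow> (real \<Rightarrow> real) \<Rightarrow> real \<Rightarrow> real" where
  "gam2 u v t = sinh (u t) * sin (v t)"
definition gam3 :: "(real \<Rightarrow> real) \<Rightarrow> (real \<Rightarrow> real) \<Rightarrow> real \<Rightarrow> real" where
  "gam3 u v t = cosh (u t)"

definition speed :: "(real \<Rightarrow> real) \<Rightarrow> (real \<Rightarrow> real) \<Rightarrow> real \<Rightarrow> real" where
  "speed u v t = sqrt ((deriv u t)^2 + (sinh (u t))^2 * (deriv v t)^2)"

definition gam2nd :: "(real \<Rightarrow> real) \<Rightarrow> (real \<Rightarrow> real) \<Rightarrow> real \<Rightarrow> real \<times> real \<times> real" where
  "gam2nd u v t = (deriv (deriv (gam1 u v)) t, deriv (deriv (gam2 u v)) t, deriv (deriv (gam3 u v)) t)"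

definition unormal :: "(real \<Rightarrow> real) \<Rightarrow> (real \<Rightarrow> real) \<Rightarrow> real \<Rightarrow> real \<times> real \<times> real" where
  "unormal u v t =
     (let u' = deriv u t; v' = deriv v t; s = speed u v t in
      ((u' * sin (v t) + sinh (u t) * cosh (u t) * v' * cos (v t)) / s,
       (sinh (u t) * cosh (u t) * v' * sin (v t) - u' * cos (v t)) / s,
       ((sinh (u t))^2 * v') / s))"

definition curvature :: "(real \<Rightarrow> real) \<Rightarrow> (real \<Rightarrow> real) \<Rightarrow> real \<Rightarrow> real" where
  "curvature u v t = lor (gam2nd u v t) (unormal u v t) / (speed u v t)^2"

definition smooth_on :: "real set \<Rightarrow> (real \<Rightarrow> real) \<Rightarrow> bool" where
  "smooth_on I f \<longleftrightarrow> (\<forall>k. ((deriv ^^ k) f) differentiable_on I)"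

text \<open>A regular smooth curve gamma = Psi(u,v) on an open interval I avoiding N (u > 0).\<close>
definition reg_curve :: "real set \<Rightarrow> (real \<Rightarrow> real) \<Rightarrow> (real \<Rightarrow> real) \<Rightarrow> bool" where
  "reg_curve I u v \<longleftrightarrow> open I \<and> is_interval I \<and> I \<noteq> {} \<and> smooth_on I u \<and> smooth_on I v \<and>
     (\<forall>t\<in>I. u t > 0 \<and> speed u v t > 0)"

definition const_curvature :: "real set \<Rightarrow> (real \<Rightarrow> real) \<Rightarrow> (real \<Rightarrow> real) \<Rightarrow> bool" where
  "const_curvature I u v \<longleftrightarrow> (\<exists>c. \<forall>t\<in>I. curvature u v t = c)"

text \<open>Euler--Lagrange equations of L = u^alpha sqrt(u'^2 + sinh^2(u) v'^2).\<close>
definition stationary :: "real \<Rightarrow> real set \<Rightarrow> (real \<Rightarrow> real) \<Rightarrow> (real \<Rightarrow> real) \<Rightarrow> bool" where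
  "stationary \<alpha> I u v \<longleftrightarrow> (\<forall>t\<in>I.
     deriv (\<lambda>s. u s powr \<alpha> * deriv u s / speed u v s) t =
        \<alpha> * u t powr (\<alpha> - 1) * speed u v t
        + u t powr \<alpha> * sinh (u t) * cosh (u t) * (deriv v t)^2 / speed u v t
   \<and> deriv (\<lambda>s. u s powr \<alpha> * (sinh (u s))^2 * deriv v s / speed u v s) t = 0)"

end

theory Submission
  imports Defs
begin

text \<open>
  Both Euler--Lagrange equations are multiples of the single quantity
  \<open>\<kappa> |\<gamma>'| u - \<alpha> sinh(u) v'\<close>: the radial one by \<open>sinh(u) v'\<close>, the angular one by \<open>u'\<close>.
  By regularity these factors never vanish together, so stationarity means
  \<open>\<kappa> |\<gamma>'| u = \<alpha> sinh(u) v'\<close>.  If \<open>\<kappa> = 0\<close> this forces \<open>v' = 0\<close>, a geodesic through \<open>N\<close>.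
  If \<open>\<kappa> = k \<noteq> 0\<close>, the angular momentum \<open>u^\<alpha> sinh(u)^2 v' / |\<gamma>'|\<close>, conserved by the
  angular equation, equals \<open>(k/\<alpha>) u^(\<alpha>+1) sinh u\<close>; differentiating gives
  \<open>u' ((\<alpha> + 1) + u coth u) = 0\<close>, and since \<open>u coth u\<close> is strictly increasing, \<open>u' = 0\<close>:
  the curve lies on a circle about \<open>N\<close>, where the equation reads \<open>\<alpha> = -r coth r\<close>.
\<close>

lemma reg_curve_has_derivs:
  assumes "reg_curve I u v" "t \<in> I"
  shows "(u has_real_derivative deriv u t) (at t)" "(v has_real_derivative deriv v t) (at t)"
    "(deriv u has_real_derivative deriv (deriv u) t) (at t)"
    "(deriv v has_real_derivative deriv (deriv v) t) (at t)"
proof -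
  have "open I" and "smooth_on I u" "smooth_on I v"
    using assms(1) by (auto simp: reg_curve_def)
  have "(deriv ^^ k) f differentiable (at t)" if "smooth_on I f" for f :: "real \<Rightarrow> real" and k
    using that assms(2) \<open>open I\<close> by (simp add: smooth_on_def differentiable_on_eq_differentiable_at)
  from this[OF \<open>smooth_on I u\<close>, of 0] this[OF \<open>smooth_on I u\<close>, of 1]
    this[OF \<open>smooth_on I v\<close>, of 0] this[OF \<open>smooth_on I v\<close>, of 1]
  show "(u has_real_derivative deriv u t) (at t)" "(v has_real_derivative deriv v t) (at t)"
    "(deriv u has_real_derivative deriv (deriv u) t) (at t)"
    "(deriv v has_real_derivative deriv (deriv v) t) (at t)"
    by (simp_all add: DERIV_deriv_iff_real_differentiable)
qed

lemma reg_curve_pos: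
  assumes "reg_curve I u v" "t \<in> I"
  shows "u t > 0" "speed u v t > 0"
  using assms by (simp_all add: reg_curve_def)

lemma speed_squared: "(speed u v t)^2 = (deriv u t)^2 + (sinh (u t))^2 * (deriv v t)^2"
  by (simp add: speed_def)

lemma reg_curve_deriv_nonzero:
  assumes "reg_curve I u v" "t \<in> I"
  shows "deriv u t \<noteq> 0 \<or> sinh (u t) * deriv v t \<noteq> 0"
  using assms speed_squared[of u v t] by (auto simp: reg_curve_def power_mult_distrib)

lemma has_real_derivative_speed:
  assumes "(u has_real_derivative deriv u t) (at t)" "(v has_real_derivative deriv v t) (at t)"
    "(deriv u has_real_derivative u2) (at t)" "(deriv v has_real_derivative v2) (at t)"
    "speed u v t > 0"
  shows "(speed u v has_real_derivative (deriv u t * u2 + sinh (u t) * cosh (u t) * deriv u t * (deriv v t)^2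
      + (sinh (u t))^2 * deriv v t * v2) / speed u v t) (at t)"
proof -
  define q where "q s = (deriv u s)^2 + (sinh (u s))^2 * (deriv v s)^2" for s
  define E where "E = deriv u t * u2 + sinh (u t) * cosh (u t) * deriv u t * (deriv v t)^2
      + (sinh (u t))^2 * deriv v t * v2"
  have dq: "(q has_real_derivative 2 * E) (at t)"
    unfolding q_def E_def
    by (rule derivative_eq_intros assms refl)+ (simp add: algebra_simps power2_eq_square)
  have q_pos: "q t > 0" and speed_eq: "speed u v = (\<lambda>s. sqrt (q s))"
    using assms(5) by (auto simp: speed_def q_def)
  have "(speed u v has_real_derivative E / speed u v t) (at t)"
    using DERIV_chain2[OF DERIV_real_sqrt[OF q_pos] dq] unfolding speed_eq
    by (simp add: field_simps)
  then show ?thesis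
    unfolding E_def .
qed

lemma deriv_deriv_eqI:
  fixes f :: "real \<Rightarrow> real"
  assumes "open I" "t \<in> I" "\<And>s. s \<in> I \<Longrightarrow> (f has_real_derivative f' s) (at s)"
    "(f' has_real_derivative f'') (at t)"
  shows "deriv (deriv f) t = f''"
proof (rule DERIV_imp_deriv)
  show "(deriv f has_real_derivative f'') (at t)"
    using assms(3) by (intro has_field_derivative_transform_within_open[OF assms(4,1,2)])
      (metis DERIV_imp_deriv)
qed

lemma deriv_deriv_gam1:
  assumes "reg_curve I u v" "t \<in> I"
  shows "deriv (deriv (gam1 u v)) t =
    cos (v t) * (sinh (u t) * (deriv u t)^2 + cosh (u t) * deriv (deriv u) t - sinh (u t) * (deriv v t)^2)
    - sin (v t) * (2 * cosh (u t) * deriv u t * deriv v t + sinh (u t) * deriv (deriv v) t)"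
proof (rule deriv_deriv_eqI[of I])
  note d = reg_curve_has_derivs[OF assms(1)]
  show "(gam1 u v has_real_derivative
      cosh (u s) * deriv u s * cos (v s) - sinh (u s) * sin (v s) * deriv v s) (at s)" if "s \<in> I" for s
    unfolding gam1_def[abs_def] by (rule derivative_eq_intros d[OF that] refl)+ (simp add: algebra_simps)
  show "((\<lambda>s. cosh (u s) * deriv u s * cos (v s) - sinh (u s) * sin (v s) * deriv v s) has_real_derivative
      cos (v t) * (sinh (u t) * (deriv u t)^2 + cosh (u t) * deriv (deriv u) t - sinh (u t) * (deriv v t)^2)
      - sin (v t) * (2 * cosh (u t) * deriv u t * deriv v t + sinh (u t) * deriv (deriv v) t)) (at t)"
    by (rule derivative_eq_intros d[OF assms(2)] refl)+ (simp add: algebra_simps power2_eq_square)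
qed (use assms in \<open>simp_all add: reg_curve_def\<close>)

lemma deriv_deriv_gam2:
  assumes "reg_curve I u v" "t \<in> I"
  shows "deriv (deriv (gam2 u v)) t =
    sin (v t) * (sinh (u t) * (deriv u t)^2 + cosh (u t) * deriv (deriv u) t - sinh (u t) * (deriv v t)^2)
    + cos (v t) * (2 * cosh (u t) * deriv u t * deriv v t + sinh (u t) * deriv (deriv v) t)"
proof (rule deriv_deriv_eqI[of I])
  note d = reg_curve_has_derivs[OF assms(1)]
  show "(gam2 u v has_real_derivative
      cosh (u s) * deriv u s * sin (v s) + sinh (u s) * cos (v s) * deriv v s) (at s)" if "s \<in> I" for s
    unfolding gam2_def[abs_def] by (rule derivative_eq_intros d[OF that] refl)+ (simp add: algebra_simps)
  show "((\<lambda>s. cosh (u s) * deriv u s * sin (v s) + sinh (u s) * cos (v s) * deriv v s) has_real_derivative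
      sin (v t) * (sinh (u t) * (deriv u t)^2 + cosh (u t) * deriv (deriv u) t - sinh (u t) * (deriv v t)^2)
      + cos (v t) * (2 * cosh (u t) * deriv u t * deriv v t + sinh (u t) * deriv (deriv v) t)) (at t)"
    by (rule derivative_eq_intros d[OF assms(2)] refl)+ (simp add: algebra_simps power2_eq_square)
qed (use assms in \<open>simp_all add: reg_curve_def\<close>)

lemma deriv_deriv_gam3:
  assumes "reg_curve I u v" "t \<in> I"
  shows "deriv (deriv (gam3 u v)) t = sinh (u t) * deriv (deriv u) t + cosh (u t) * (deriv u t)^2"
proof (rule deriv_deriv_eqI[of I])
  note d = reg_curve_has_derivs[OF assms(1)]
  show "(gam3 u v has_real_derivative sinh (u s) * deriv u s) (at s)" if "s \<in> I" for s
    unfolding gam3_def[abs_def] by (rule derivative_eq_intros d[OF that] refl)+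
  show "((\<lambda>s. sinh (u s) * deriv u s) has_real_derivative
      sinh (u t) * deriv (deriv u) t + cosh (u t) * (deriv u t)^2) (at t)"
    by (rule derivative_eq_intros d[OF assms(2)] refl)+ (simp add: algebra_simps power2_eq_square)
qed (use assms in \<open>simp_all add: reg_curve_def\<close>)

text \<open>With \<open>s, c = sin v, cos v\<close>, \<open>sh, ch = sinh u, cosh u\<close> and \<open>U1, U2, V1, V2\<close> the first two
  derivatives of \<open>u, v\<close>, the left-hand side is the Lorentzian product of \<open>\<gamma>''\<close> with \<open>|\<gamma>'| n\<close>.\<close>

lemma lorentz_curvature_identity:
  fixes s c sh ch U1 U2 V1 V2 :: real
  assumes "s^2 + c^2 = 1" "ch^2 = sh^2 + 1"
  shows "(c * (sh * U1^2 + ch * U2 - sh * V1^2) - s * (2 * ch * U1 * V1 + sh * V2)) * (U1 * s + sh * ch * V1 * c)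
    + (s * (sh * U1^2 + ch * U2 - sh * V1^2) + c * (2 * ch * U1 * V1 + sh * V2)) * (sh * ch * V1 * s - U1 * c)
    - (sh * U2 + ch * U1^2) * (sh^2 * V1)
    = sh * U2 * V1 - sh * U1 * V2 - 2 * ch * U1^2 * V1 - sh^2 * ch * V1^3"
  using assms by algebra

lemma lor_divide_right: "lor x (a / s, b / s, c / s) = lor x (a, b, c) / s"
  by (simp add: lor_def add_divide_distrib diff_divide_distrib)

lemma curvature_eq:
  assumes "reg_curve I u v" "t \<in> I"
  shows "curvature u v t = (sinh (u t) * deriv (deriv u) t * deriv v t - sinh (u t) * deriv u t * deriv (deriv v) t
      - 2 * cosh (u t) * (deriv u t)^2 * deriv v t - (sinh (u t))^2 * cosh (u t) * (deriv v t)^3)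
      / (speed u v t)^3"
  unfolding curvature_def unormal_def Let_def lor_divide_right
  unfolding gam2nd_def deriv_deriv_gam1[OF assms] deriv_deriv_gam2[OF assms] deriv_deriv_gam3[OF assms]
    lor_def fst_conv snd_conv
    lorentz_curvature_identity[OF sin_cos_squared_add cosh_square_eq]
  by (simp add: power3_eq_cube power2_eq_square)

lemma euler_lagrange_radial_eq:
  assumes "reg_curve I u v" "t \<in> I"
  shows "deriv (\<lambda>s. u s powr \<alpha> * deriv u s / speed u v s) t
      - (\<alpha> * u t powr (\<alpha> - 1) * speed u v t + u t powr \<alpha> * sinh (u t) * cosh (u t) * (deriv v t)^2 / speed u v t)
    = u t powr \<alpha> * sinh (u t) * deriv v t
      * (curvature u v t * speed u v t * u t - \<alpha> * sinh (u t) * deriv v t) / (u t * speed u v t)"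
proof -
  note d = reg_curve_has_derivs[OF assms]
  note pos = reg_curve_pos[OF assms]
  note D = DERIV_divide[OF DERIV_mult[OF DERIV_fun_powr[OF d(1) pos(1), of \<alpha>] d(3)]
      has_real_derivative_speed[OF d pos(2)] pos(2)[THEN less_imp_neq, THEN not_sym]]
  show ?thesis
    unfolding DERIV_imp_deriv[OF D] curvature_eq[OF assms] using pos speed_squared[of u v t]
    by (simp add: powr_diff field_simps) algebra
qed

lemma euler_lagrange_angular_eq:
  assumes "reg_curve I u v" "t \<in> I"
  shows "deriv (\<lambda>s. u s powr \<alpha> * (sinh (u s))^2 * deriv v s / speed u v s) t
    = - (u t powr \<alpha> * sinh (u t) * deriv u t
      * (curvature u v t * speed u v t * u t - \<alpha> * sinh (u t) * deriv v t) / (u t * speed u v t))"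
proof -
  note d = reg_curve_has_derivs[OF assms]
  note pos = reg_curve_pos[OF assms]
  have "((\<lambda>s. (sinh (u s))^2) has_real_derivative 2 * sinh (u t) * cosh (u t) * deriv u t) (at t)"
    by (rule derivative_eq_intros d refl)+ simp
  note D = DERIV_divide[OF DERIV_mult[OF DERIV_mult[OF DERIV_fun_powr[OF d(1) pos(1), of \<alpha>] this] d(4)]
      has_real_derivative_speed[OF d pos(2)] pos(2)[THEN less_imp_neq, THEN not_sym]]
  show ?thesis
    unfolding DERIV_imp_deriv[OF D] curvature_eq[OF assms] using pos speed_squared[of u v t]
    by (simp add: powr_diff field_simps) algebra
qed

lemma euler_lagrange_iff:
  assumes "reg_curve I u v" "t \<in> I"
  shows "(deriv (\<lambda>s. u s powr \<alpha> * deriv u s / speed u v s) t =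
        \<alpha> * u t powr (\<alpha> - 1) * speed u v t + u t powr \<alpha> * sinh (u t) * cosh (u t) * (deriv v t)^2 / speed u v t
      \<and> deriv (\<lambda>s. u s powr \<alpha> * (sinh (u s))^2 * deriv v s / speed u v s) t = 0)
    \<longleftrightarrow> curvature u v t * speed u v t * u t = \<alpha> * sinh (u t) * deriv v t"
    (is "?radial \<and> ?angular \<longleftrightarrow> _")
proof -
  define X where "X = curvature u v t * speed u v t * u t - \<alpha> * sinh (u t) * deriv v t"
  have pos: "u t powr \<alpha> > 0" "sinh (u t) > 0" "u t > 0" "speed u v t > 0"
    using reg_curve_pos[OF assms] by simp_all
  have "?radial \<longleftrightarrow> u t powr \<alpha> * sinh (u t) * deriv v t * X / (u t * speed u v t) = 0"
    using euler_lagrange_radial_eq[OF assms, of \<alpha>] unfolding X_def by linarith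
  also have "\<dots> \<longleftrightarrow> deriv v t * X = 0"
    using pos by simp
  moreover have "?angular \<longleftrightarrow> deriv u t * X = 0"
    using euler_lagrange_angular_eq[OF assms, of \<alpha>] pos unfolding X_def[symmetric] by simp
  moreover have "deriv u t \<noteq> 0 \<or> deriv v t \<noteq> 0"
    using reg_curve_deriv_nonzero[OF assms] by auto
  ultimately have "?radial \<and> ?angular \<longleftrightarrow> X = 0"
    by auto
  then show ?thesis
    by (simp add: X_def)
qed

lemma stationary_iff:
  assumes "reg_curve I u v"
  shows "stationary \<alpha> I u v \<longleftrightarrow>
    (\<forall>t\<in>I. curvature u v t * speed u v t * u t = \<alpha> * sinh (u t) * deriv v t)"
  unfolding stationary_def using euler_lagrange_iff[OF assms] by (intro ball_cong) simp_all

lemma deriv_eq_0_if_locally_const: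
  fixes f :: "real \<Rightarrow> real"
  assumes "open I" "t \<in> I" "\<And>s. s \<in> I \<Longrightarrow> f s = c"
  shows "deriv f t = 0"
proof (rule DERIV_imp_deriv)
  show "(f has_real_derivative 0) (at t)"
    by (rule has_field_derivative_transform_within_open[OF DERIV_const assms(1,2)]) (simp add: assms(3))
qed

lemma const_on_interval_if_deriv_eq_0:
  fixes f :: "real \<Rightarrow> real"
  assumes "is_interval I" "\<And>t. t \<in> I \<Longrightarrow> (f has_real_derivative deriv f t) (at t)"
    and "\<And>t. t \<in> I \<Longrightarrow> deriv f t = 0"
  obtains c where "\<And>t. t \<in> I \<Longrightarrow> f t = c"
proof -
  have "\<exists>c. \<forall>t\<in>I. f t = c"
  proof (rule has_field_derivative_zero_constant)
    show "convex I"
      using assms(1) by (simp add: is_interval_convex)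
    show "(f has_real_derivative 0) (at t within I)" if "t \<in> I" for t
      using assms(2,3)[OF that] by (simp add: has_field_derivative_at_within)
  qed
  then show ?thesis
    using that by blast
qed

lemma Psi_in_H2: "Psi u v \<in> H2"
proof -
  have "(sinh u * cos v)^2 + (sinh u * sin v)^2 - (cosh u)^2 = -1"
    using sin_cos_squared_add[of v] cosh_square_eq[of u] by algebra
  then show ?thesis
    by (simp add: H2_def Psi_def)
qed

lemma deriv_v_eq_0_if_on_geodesic_through_Npole:
  assumes "reg_curve I u v" "hgeodesic G" "Npole \<in> G" "gam u v ` I \<subseteq> G" "t \<in> I"
  shows "deriv v t = 0"
proof (rule ccontr)
  assume "deriv v t \<noteq> 0"
  obtain a b c where "(a, b, c) \<noteq> (0, 0, 0)"
    and G: "G = {p \<in> H2. a * fst p + b * fst (snd p) + c * snd (snd p) = 0}"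
    using assms(2) unfolding hgeodesic_def by blast
  with assms(3) have "c = 0" and ab: "a \<noteq> 0 \<or> b \<noteq> 0"
    by (auto simp: Npole_def)
  have plane: "a * cos (v s) + b * sin (v s) = 0" if "s \<in> I" for s
  proof -
    have "gam u v s \<in> G"
      using assms(4) that by blast
    then have "a * (sinh (u s) * cos (v s)) + b * (sinh (u s) * sin (v s)) = 0"
      using \<open>c = 0\<close> unfolding G gam_def Psi_def by simp
    then have "sinh (u s) * (a * cos (v s) + b * sin (v s)) = 0"
      by (simp add: algebra_simps)
    then show ?thesis
      using reg_curve_pos(1)[OF assms(1) that] by simp
  qed
  have "((\<lambda>s. a * cos (v s) + b * sin (v s)) has_real_derivative
      (b * cos (v t) - a * sin (v t)) * deriv v t) (at t)"
    by (rule derivative_eq_intros reg_curve_has_derivs[OF assms(1,5)] refl)+ (simp add: algebra_simps)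
  then have "deriv (\<lambda>s. a * cos (v s) + b * sin (v s)) t = (b * cos (v t) - a * sin (v t)) * deriv v t"
    by (rule DERIV_imp_deriv)
  moreover have "deriv (\<lambda>s. a * cos (v s) + b * sin (v s)) t = 0"
    using assms(1) by (intro deriv_eq_0_if_locally_const[OF _ assms(5) plane]) (simp add: reg_curve_def)
  ultimately have "b * cos (v t) - a * sin (v t) = 0"
    using \<open>deriv v t \<noteq> 0\<close> by simp
  then have "a = 0" "b = 0"
    using plane[OF assms(5)] sin_cos_squared_add[of "v t"] by algebra+
  with ab show False
    by simp
qed

lemma on_geodesic_through_Npole_if_const:
  assumes "\<And>t. t \<in> I \<Longrightarrow> v t = c"
  shows "\<exists>G. hgeodesic G \<and> Npole \<in> G \<and> gam u v ` I \<subseteq> G"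
proof -
  define G where "G = {p \<in> H2. sin c * fst p + (- cos c) * fst (snd p) + 0 * snd (snd p) = 0}"
  have "Npole \<in> G"
    by (simp add: G_def Npole_def H2_def)
  moreover have "hgeodesic G"
    unfolding hgeodesic_def
  proof (intro conjI exI)
    show "G \<noteq> {}"
      using \<open>Npole \<in> G\<close> by blast
    show "(sin c, - cos c, 0::real) \<noteq> (0, 0, 0)"
      by (auto dest: sin_zero_abs_cos_one)
  qed (fact G_def)
  moreover have "gam u v ` I \<subseteq> G"
    using Psi_in_H2 assms by (auto simp: G_def gam_def Psi_def)
  ultimately show ?thesis
    by blast
qed

lemma on_geodesic_through_Npole_iff:
  assumes "reg_curve I u v"
  shows "(\<exists>G. hgeodesic G \<and> Npole \<in> G \<and> gam u v ` I \<subseteq> G) \<longleftrightarrow> (\<forall>t\<in>I. deriv v t = 0)"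
proof
  assume "\<exists>G. hgeodesic G \<and> Npole \<in> G \<and> gam u v ` I \<subseteq> G"
  then show "\<forall>t\<in>I. deriv v t = 0"
    using deriv_v_eq_0_if_on_geodesic_through_Npole[OF assms] by blast
next
  assume "\<forall>t\<in>I. deriv v t = 0"
  moreover have "is_interval I"
    using assms by (simp add: reg_curve_def)
  ultimately obtain c where "\<And>t. t \<in> I \<Longrightarrow> v t = c"
    using const_on_interval_if_deriv_eq_0 reg_curve_has_derivs(2)[OF assms] by metis
  then show "\<exists>G. hgeodesic G \<and> Npole \<in> G \<and> gam u v ` I \<subseteq> G"
    by (rule on_geodesic_through_Npole_if_const)
qed

lemma gam_subset_hcircle_iff:
  assumes "r > 0" "\<And>t. t \<in> I \<Longrightarrow> u t > 0"
  shows "gam u v ` I \<subseteq> hcircle r \<longleftrightarrow> (\<forall>t\<in>I. u t = r)"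
proof
  assume circle: "gam u v ` I \<subseteq> hcircle r"
  show "\<forall>t\<in>I. u t = r"
  proof
    fix t assume "t \<in> I"
    with circle obtain w where "Psi (u t) (v t) = Psi r w"
      by (auto simp: hcircle_def gam_def)
    then have "cosh (u t) = cosh r"
      by (simp add: Psi_def)
    then show "u t = r"
      using assms(1) assms(2)[OF \<open>t \<in> I\<close>] by simp
  qed
qed (auto simp: hcircle_def gam_def)

lemma curvature_eq_0_if_deriv_v_eq_0:
  assumes "reg_curve I u v" "\<And>t. t \<in> I \<Longrightarrow> deriv v t = 0" "t \<in> I"
  shows "curvature u v t = 0"
proof -
  have "deriv (deriv v) t = 0"
    using assms by (intro deriv_eq_0_if_locally_const[of I]) (auto simp: reg_curve_def)
  then show ?thesis
    using assms by (simp add: curvature_eq)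
qed

lemma curvature_mult_speed_on_circle:
  assumes "reg_curve I u v" "\<And>t. t \<in> I \<Longrightarrow> u t = r" "t \<in> I"
  shows "deriv v t \<noteq> 0" and "curvature u v t * speed u v t = - cosh r * deriv v t"
proof -
  have "open I" using assms(1) by (simp add: reg_curve_def)
  have du: "deriv u s = 0" if "s \<in> I" for s
    using deriv_eq_0_if_locally_const[OF \<open>open I\<close> that assms(2)] .
  have ddu: "deriv (deriv u) t = 0"
    using deriv_eq_0_if_locally_const[OF \<open>open I\<close> assms(3) du] .
  have S: "speed u v t > 0" and "r > 0"
    using reg_curve_pos[OF assms(1,3)] assms(2,3) by auto
  have S2: "(speed u v t)^2 = (sinh r)^2 * (deriv v t)^2"
    using speed_squared[of u v t] du[OF assms(3)] assms(2,3) by simp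
  then show "deriv v t \<noteq> 0"
    using S by auto
  have "curvature u v t * speed u v t = - ((sinh r)^2 * cosh r * (deriv v t)^3) / (speed u v t)^2"
    using S du[OF assms(3)] ddu assms(2,3)
    by (simp add: curvature_eq[OF assms(1,3)] power3_eq_cube power2_eq_square)
  also have "\<dots> = - cosh r * deriv v t"
    using \<open>deriv v t \<noteq> 0\<close> \<open>r > 0\<close> unfolding S2 by (simp add: power3_eq_cube power2_eq_square)
  finally show "curvature u v t * speed u v t = - cosh r * deriv v t" .
qed

lemma stationary_if_deriv_v_eq_0:
  assumes "reg_curve I u v" "\<And>t. t \<in> I \<Longrightarrow> deriv v t = 0"
  shows "stationary \<alpha> I u v"
  using assms by (simp add: stationary_iff curvature_eq_0_if_deriv_v_eq_0)

lemma stationary_on_circle_iff: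
  assumes "reg_curve I u v" "r > 0" "\<And>t. t \<in> I \<Longrightarrow> u t = r"
  shows "stationary \<alpha> I u v \<longleftrightarrow> \<alpha> = - r * cosh r / sinh r"
proof -
  have "curvature u v t * speed u v t * u t = \<alpha> * sinh (u t) * deriv v t
      \<longleftrightarrow> \<alpha> * sinh r = - r * cosh r" if "t \<in> I" for t
  proof -
    note circle = curvature_mult_speed_on_circle[OF assms(1,3) that]
    have "curvature u v t * speed u v t * u t = \<alpha> * sinh (u t) * deriv v t
        \<longleftrightarrow> (\<alpha> * sinh r) * deriv v t = (- r * cosh r) * deriv v t"
      using circle(2) assms(3)[OF that] by (auto simp: algebra_simps)
    also have "\<dots> \<longleftrightarrow> \<alpha> * sinh r = - r * cosh r"
      by (rule mult_right_cancel[OF circle(1)])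
    finally show ?thesis .
  qed
  then have "stationary \<alpha> I u v \<longleftrightarrow> (\<forall>t\<in>I. \<alpha> * sinh r = - r * cosh r)"
    using stationary_iff[OF assms(1)] by simp
  also have "\<dots> \<longleftrightarrow> \<alpha> = - r * cosh r / sinh r"
    using assms(1,2) by (auto simp: reg_curve_def field_simps)
  finally show ?thesis .
qed

lemma less_sinh_mult_cosh:
  fixes x :: real
  assumes "x > 0"
  shows "x < sinh x * cosh x"
proof -
  have "x \<le> sinh x"
    using real_le_x_sinh[of x] assms by (simp add: sinh_field_def exp_minus)
  also have "sinh x < sinh x * cosh x"
    using assms cosh_real_ge_1[of x] cosh_real_one_iff[of x] by (simp add: less_le)
  finally show ?thesis .
qed

lemma has_real_derivative_x_cosh_div_sinh:
  fixes x :: real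
  assumes "x > 0"
  shows "((\<lambda>y. y * cosh y / sinh y) has_real_derivative (sinh x * cosh x - x) / (sinh x)^2) (at x)"
  using assms cosh_square_eq[of x]
  by (auto intro!: derivative_eq_intros simp: field_simps power2_eq_square)

lemma deriv_eq_0_if_deriv_mult_comp_eq_0:
  fixes u u' \<psi> \<psi>' :: "real \<Rightarrow> real"
  assumes "open I" "t \<in> I"
    and u: "\<And>s. s \<in> I \<Longrightarrow> (u has_real_derivative u' s) (at s)" and "isCont u' t"
    and \<psi>: "(\<psi> has_real_derivative \<psi>' (u t)) (at (u t))" "\<psi>' (u t) \<noteq> 0"
    and zero: "\<And>s. s \<in> I \<Longrightarrow> u' s * \<psi> (u s) = 0"
  shows "u' t = 0"
proof (rule ccontr)
  assume "u' t \<noteq> 0"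
  have "eventually (\<lambda>s. u' s \<noteq> 0) (at t)"
    using \<open>isCont u' t\<close> \<open>u' t \<noteq> 0\<close> unfolding isCont_def by (rule tendsto_imp_eventually_ne)
  with \<open>u' t \<noteq> 0\<close> have "eventually (\<lambda>s. u' s \<noteq> 0) (nhds t)"
    by (simp add: eventually_nhds_conv_at)
  then have "eventually (\<lambda>s. \<psi> (u s) = 0) (nhds t)"
    using eventually_nhds_in_open[OF assms(1,2)] by eventually_elim (use zero in auto)
  then have "((\<lambda>s. \<psi> (u s)) has_real_derivative 0) (at t) \<longleftrightarrow> ((\<lambda>_. 0) has_real_derivative 0) (at t)"
    by (intro DERIV_cong_ev) simp_all
  then have "((\<lambda>s. \<psi> (u s)) has_real_derivative 0) (at t)"
    by simp
  moreover have "((\<lambda>s. \<psi> (u s)) has_real_derivative \<psi>' (u t) * u' t) (at t)"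
    using DERIV_chain2[OF \<psi>(1) u[OF assms(2)]] .
  ultimately have "\<psi>' (u t) * u' t = 0"
    by (rule DERIV_unique[symmetric])
  with \<psi>(2) \<open>u' t \<noteq> 0\<close> show False
    by simp
qed

lemma angular_momentum_eq_if_stationary:
  assumes "\<alpha> \<noteq> 0" "reg_curve I u v" "stationary \<alpha> I u v" "\<And>t. t \<in> I \<Longrightarrow> curvature u v t = k"
    and "t \<in> I"
  shows "u t powr \<alpha> * (sinh (u t))^2 * deriv v t / speed u v t = k / \<alpha> * (u t powr \<alpha> * u t * sinh (u t))"
proof -
  have "k * speed u v t * u t = \<alpha> * sinh (u t) * deriv v t"
    using assms(2-5) by (simp add: stationary_iff)
  then show ?thesis
    using reg_curve_pos[OF assms(2,5)] assms(1) by (simp add: field_simps power2_eq_square)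
qed

lemma deriv_u_mult_eq_0_if_stationary_const_curvature:
  assumes "\<alpha> \<noteq> 0" "reg_curve I u v" "stationary \<alpha> I u v" "\<And>t. t \<in> I \<Longrightarrow> curvature u v t = k"
    and "k \<noteq> 0" "t \<in> I"
  shows "deriv u t * (\<alpha> + 1 + u t * cosh (u t) / sinh (u t)) = 0"
proof -
  have "open I" using assms(2) by (simp add: reg_curve_def)
  have pos: "u t > 0" "sinh (u t) > 0" "u t powr \<alpha> > 0"
    using reg_curve_pos(1)[OF assms(2,6)] by simp_all
  note d = reg_curve_has_derivs(1)[OF assms(2,6)]
  have "((\<lambda>s. sinh (u s)) has_real_derivative cosh (u t) * deriv u t) (at t)"
    by (rule derivative_eq_intros d refl)+
  note D = DERIV_cmult[OF DERIV_mult[OF DERIV_mult[OF DERIV_fun_powr[OF d pos(1)] d] this], of "k / \<alpha>"]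
  have "((\<lambda>s. u s powr \<alpha> * (sinh (u s))^2 * deriv v s / speed u v s) has_real_derivative
      k / \<alpha> * ((\<alpha> * u t powr (\<alpha> - of_nat 1) * deriv u t * u t + deriv u t * u t powr \<alpha>) * sinh (u t)
        + cosh (u t) * deriv u t * (u t powr \<alpha> * u t))) (at t)"
    by (rule has_field_derivative_transform_within_open[OF D \<open>open I\<close> assms(6)])
      (simp add: angular_momentum_eq_if_stationary[OF assms(1-4)])
  moreover have "deriv (\<lambda>s. u s powr \<alpha> * (sinh (u s))^2 * deriv v s / speed u v s) t = 0"
    using assms(3,6) by (simp add: stationary_def)
  ultimately have "k / \<alpha> * ((\<alpha> * u t powr (\<alpha> - of_nat 1) * deriv u t * u t + deriv u t * u t powr \<alpha>) * sinh (u t)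
        + cosh (u t) * deriv u t * (u t powr \<alpha> * u t)) = 0"
    by (simp add: DERIV_imp_deriv)
  then have "k / \<alpha> * u t powr \<alpha> * (deriv u t * ((\<alpha> + 1) * sinh (u t) + u t * cosh (u t))) = 0"
    using pos by (simp add: powr_diff field_simps)
  then have "deriv u t * ((\<alpha> + 1) * sinh (u t) + u t * cosh (u t)) = 0"
    using assms(1,5) pos by simp
  then show ?thesis
    using pos by (simp add: field_simps)
qed

lemma deriv_u_eq_0_if_stationary_const_curvature:
  assumes "\<alpha> \<noteq> 0" "reg_curve I u v" "stationary \<alpha> I u v" "\<And>t. t \<in> I \<Longrightarrow> curvature u v t = k"
    and "k \<noteq> 0" "t \<in> I"
  shows "deriv u t = 0"
proof (rule deriv_eq_0_if_deriv_mult_comp_eq_0[where \<psi> = "\<lambda>x. \<alpha> + 1 + x * cosh x / sinh x"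
      and \<psi>' = "\<lambda>x. (sinh x * cosh x - x) / (sinh x)^2" and u' = "deriv u"])
  show "open I"
    using assms(2) by (simp add: reg_curve_def)
  show "(u has_real_derivative deriv u s) (at s)" if "s \<in> I" for s
    using reg_curve_has_derivs(1)[OF assms(2) that] .
  show "isCont (deriv u) t"
    using reg_curve_has_derivs(3)[OF assms(2,6)] by (rule DERIV_isCont)
  have "u t > 0"
    using reg_curve_pos(1)[OF assms(2,6)] .
  then show "((\<lambda>x. \<alpha> + 1 + x * cosh x / sinh x) has_real_derivative
      (sinh (u t) * cosh (u t) - u t) / (sinh (u t))^2) (at (u t))"
    using DERIV_add[OF DERIV_const has_real_derivative_x_cosh_div_sinh] by simp
  show "(sinh (u t) * cosh (u t) - u t) / (sinh (u t))^2 \<noteq> 0"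
    using less_sinh_mult_cosh[OF \<open>u t > 0\<close>] \<open>u t > 0\<close> by simp
  show "deriv u s * (\<alpha> + 1 + u s * cosh (u s) / sinh (u s)) = 0" if "s \<in> I" for s
    using deriv_u_mult_eq_0_if_stationary_const_curvature[OF assms(1-5) that] .
qed (fact assms(6))

lemma stationary_const_curvature_cases:
  assumes "\<alpha> \<noteq> 0" "reg_curve I u v" "const_curvature I u v" "stationary \<alpha> I u v"
  shows "(\<forall>t\<in>I. deriv v t = 0) \<or> (\<forall>t\<in>I. deriv u t = 0)"
proof -
  obtain k where k: "\<And>t. t \<in> I \<Longrightarrow> curvature u v t = k"
    using assms(3) by (auto simp: const_curvature_def)
  show ?thesis
  proof (cases "k = 0")
    case True
    have "deriv v t = 0" if "t \<in> I" for t
    proof -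
      have "curvature u v t * speed u v t * u t = \<alpha> * sinh (u t) * deriv v t"
        using assms(4) that by (simp add: stationary_iff[OF assms(2)])
      then have "\<alpha> * sinh (u t) * deriv v t = 0"
        using True k[OF that] by simp
      then show ?thesis
        using assms(1) reg_curve_pos(1)[OF assms(2) that] by simp
    qed
    then show ?thesis by blast
  next
    case False
    then show ?thesis
      using deriv_u_eq_0_if_stationary_const_curvature[OF assms(1,2,4) k] by blast
  qed
qed

lemma const_radius_if_deriv_u_eq_0:
  assumes "reg_curve I u v" "\<forall>t\<in>I. deriv u t = 0"
  obtains r where "r > 0" "\<And>t. t \<in> I \<Longrightarrow> u t = r"
proof -
  have "is_interval I"
    using assms(1) by (simp add: reg_curve_def)
  then obtain r where r: "\<And>t. t \<in> I \<Longrightarrow> u t = r"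
    using const_on_interval_if_deriv_eq_0 reg_curve_has_derivs(1)[OF assms(1)] assms(2) by metis
  obtain t0 where "t0 \<in> I"
    using assms(1) by (auto simp: reg_curve_def)
  then have "r > 0"
    using reg_curve_pos(1)[OF assms(1) \<open>t0 \<in> I\<close>] r[OF \<open>t0 \<in> I\<close>] by simp
  with r show ?thesis
    using that by blast
qed

lemma stationary_iff_on_geodesic_or_circle:
  assumes "\<alpha> \<noteq> 0" "reg_curve I u v" "const_curvature I u v"
  shows "stationary \<alpha> I u v \<longleftrightarrow>
    (\<exists>G. hgeodesic G \<and> Npole \<in> G \<and> gam u v ` I \<subseteq> G) \<or>
    (\<exists>r>0. gam u v ` I \<subseteq> hcircle r \<and> \<alpha> = - r * cosh r / sinh r)"
    (is "_ \<longleftrightarrow> ?geodesic \<or> ?circle")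
proof
  assume stat: "stationary \<alpha> I u v"
  from stationary_const_curvature_cases[OF assms stat]
  show "?geodesic \<or> ?circle"
  proof
    assume "\<forall>t\<in>I. deriv v t = 0"
    then have ?geodesic
      using on_geodesic_through_Npole_iff[OF assms(2)] by (simp only:)
    then show ?thesis ..
  next
    assume "\<forall>t\<in>I. deriv u t = 0"
    then obtain r where "r > 0" and r: "\<And>t. t \<in> I \<Longrightarrow> u t = r"
      using const_radius_if_deriv_u_eq_0[OF assms(2)] by blast
    have "gam u v ` I \<subseteq> hcircle r"
      using gam_subset_hcircle_iff[OF \<open>r > 0\<close> reg_curve_pos(1)[OF assms(2)]] r by simp
    moreover have "\<alpha> = - r * cosh r / sinh r"
      using stationary_on_circle_iff[OF assms(2) \<open>r > 0\<close> r] stat by simp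
    ultimately show ?thesis
      using \<open>r > 0\<close> by blast
  qed
next
  assume "?geodesic \<or> ?circle"
  then show "stationary \<alpha> I u v"
  proof
    assume ?geodesic
    then have "\<forall>t\<in>I. deriv v t = 0"
      using on_geodesic_through_Npole_iff[OF assms(2)] by (simp only:)
    then show ?thesis
      using stationary_if_deriv_v_eq_0[OF assms(2)] by simp
  next
    assume ?circle
    then obtain r where "r > 0" "gam u v ` I \<subseteq> hcircle r" and \<alpha>: "\<alpha> = - r * cosh r / sinh r"
      by blast
    then have "\<forall>t\<in>I. u t = r"
      using gam_subset_hcircle_iff[OF \<open>r > 0\<close> reg_curve_pos(1)[OF assms(2)]] by simp
    then show ?thesis
      using stationary_on_circle_iff[OF assms(2) \<open>r > 0\<close>] \<alpha> by simp
  qed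
qed

lemma smooth_on_const: "smooth_on I (\<lambda>_. c :: real)"
proof -
  have "(deriv ^^ k) (\<lambda>_. c) = (\<lambda>_. if k = 0 then c else 0)" for k
    by (induction k) auto
  then show ?thesis
    by (simp add: smooth_on_def)
qed

lemma smooth_on_ident: "smooth_on I (\<lambda>t. t :: real)"
  unfolding smooth_on_def
proof
  fix k
  show "(deriv ^^ k) (\<lambda>t. t) differentiable_on I"
  proof (cases k)
    case (Suc j)
    then have "(deriv ^^ k) (\<lambda>t. t :: real) = (deriv ^^ j) (\<lambda>_. 1)"
      by (simp only: funpow_Suc_right o_apply deriv_ident)
    then show ?thesis
      using smooth_on_const[of I 1] by (simp add: smooth_on_def)
  qed simp
qed

lemma exists_stationary_on_geodesic_through_Npole:
  "\<exists>I u v G. reg_curve I u v \<and> const_curvature I u v \<and>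
     hgeodesic G \<and> Npole \<in> G \<and> gam u v ` I \<subseteq> G \<and> stationary \<alpha> I u v"
proof -
  have curve: "reg_curve {0<..} (\<lambda>t. t) (\<lambda>_. 0)"
    unfolding reg_curve_def speed_def by (simp add: smooth_on_const smooth_on_ident)
  have radial: "deriv (\<lambda>_. 0) t = (0 :: real)" for t
    by simp
  have "curvature (\<lambda>t. t) (\<lambda>_. 0) t = 0" if "t \<in> {0<..}" for t
    using curvature_eq_0_if_deriv_v_eq_0[OF curve radial that] .
  then have "const_curvature {0<..} (\<lambda>t. t) (\<lambda>_. 0)"
    unfolding const_curvature_def by blast
  moreover obtain G where "hgeodesic G" "Npole \<in> G" "gam (\<lambda>t. t) (\<lambda>_. 0) ` {0<..} \<subseteq> G"
    using on_geodesic_through_Npole_if_const[of "{0<..}" "\<lambda>_. 0"] by blast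
  ultimately show ?thesis
    using curve stationary_if_deriv_v_eq_0[OF curve radial, of \<alpha>] by blast
qed

lemma exists_stationary_on_circle:
  assumes "r > 0"
  shows "\<exists>I u v. reg_curve I u v \<and> const_curvature I u v \<and>
     gam u v ` I \<subseteq> hcircle r \<and> stationary (- r * cosh r / sinh r) I u v"
proof -
  have curve: "reg_curve UNIV (\<lambda>_. r) (\<lambda>t. t)"
    using assms by (simp add: reg_curve_def speed_def smooth_on_const smooth_on_ident)
  have "curvature (\<lambda>_. r) (\<lambda>t. t) t = - cosh r / sinh r" for t
    using curvature_mult_speed_on_circle(2)[OF curve _ UNIV_I, of r t] assms
    by (simp add: speed_def field_simps)
  then have "const_curvature UNIV (\<lambda>_. r) (\<lambda>t. t)"
    by (auto simp: const_curvature_def)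
  moreover have "gam (\<lambda>_. r) (\<lambda>t. t) ` UNIV \<subseteq> hcircle r"
    using gam_subset_hcircle_iff[OF assms] assms by simp
  ultimately show ?thesis
    using curve stationary_on_circle_iff[OF curve assms] by blast
qed

theorem theorem2p5:
  fixes \<alpha> :: real
  assumes "\<alpha> \<noteq> 0"
  shows "(\<forall>(I :: real set) (u :: real \<Rightarrow> real) (v :: real \<Rightarrow> real).
            reg_curve I u v \<and> const_curvature I u v \<longrightarrow>
              (stationary \<alpha> I u v \<longleftrightarrow>
                 ((\<exists>G. hgeodesic G \<and> Npole \<in> G \<and> gam u v ` I \<subseteq> G) \<or>
                  (\<exists>r>0. gam u v ` I \<subseteq> hcircle r \<and> \<alpha> = - r * cosh r / sinh r))))
       \<and> (\<exists>(I :: real set) (u :: real \<Rightarrow> real) (v :: real \<Rightarrow> real) G.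
            reg_curve I u v \<and> const_curvature I u v \<and>
            hgeodesic G \<and> Npole \<in> G \<and> gam u v ` I \<subseteq> G \<and> stationary \<alpha> I u v)
       \<and> (\<forall>r>0. \<exists>(I :: real set) (u :: real \<Rightarrow> real) (v :: real \<Rightarrow> real).
            reg_curve I u v \<and> const_curvature I u v \<and>
            gam u v ` I \<subseteq> hcircle r \<and> stationary (- r * cosh r / sinh r) I u v)"
proof (intro conjI allI impI)
  fix I u v
  assume "reg_curve I u v \<and> const_curvature I u v"
  then show "stationary \<alpha> I u v \<longleftrightarrow>
      (\<exists>G. hgeodesic G \<and> Npole \<in> G \<and> gam u v ` I \<subseteq> G) \<or>
      (\<exists>r>0. gam u v ` I \<subseteq> hcircle r \<and> \<alpha> = - r * cosh r / sinh r)"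
    by (intro stationary_iff_on_geodesic_or_circle[OF assms]) simp_all
next
  fix r :: real
  assume "r > 0"
  then show "\<exists>I u v. reg_curve I u v \<and> const_curvature I u v \<and>
      gam u v ` I \<subseteq> hcircle r \<and> stationary (- r * cosh r / sinh r) I u v"
    by (rule exists_stationary_on_circle)
qed (rule exists_stationary_on_geodesic_through_Npole)

end
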